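(* Let $\mathcal{T}\in\mathbb{K}^{R\times R\times K}$ be slice mix invertible and let $\mathrm{span}(\boldsymbol{\lambda})$ be a JGE value of $\mathcal{T}$. Let $\mathbf{U}\in\mathbb{K}^{K\times K}$ be invertible and $\mathcal{S}=\mathcal{T}\cdot_3\mathbf{U}$. Then $\mathcal{S}$ is slice mix invertible and $\mathrm{span}(\mathbf{U}\boldsymbol{\lambda})$ is a JGE value of $\mathcal{S}$ whose algebraic multiplicity (as a JGE value of $\mathcal{S}$) equals the algebraic multiplicity of $\mathrm{span}(\boldsymbol{\lambda})$ (as a JGE value of $\mathcal{T}$). Furthermore, if $\mathbf{x}$ is a JGE vector of $\mathcal{T}$ with $(\mathrm{span}(\boldsymbol{\lambda}),\mathbf{x})$ a JGE pair, then $(\mathrm{span}(\mathbf{U}\boldsymbol{\lambda}),\mathbf{x})$ is a JGE pair of $\mathcal{S}$; consequently the geometric multiplicities of $\mathrm{span}(\boldsymbol{\lambda})$ for $\mathcal{T}$ and of $\mathrm{span}(\mathbf{U}\boldsymbol{\lambda})$ for $\mathcal{S}$ are equal.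
   Context: $\mathbb{K}$ denotes $\mathbb{R}$ or $\mathbb{C}$. $\mathcal{S}=\mathcal{T}\cdot_3\mathbf{U}$ has slices $\mathbf{S}_k=\sum_l U_{kl}\mathbf{T}_l$. For $\mathcal{X}$ with slices $\mathbf{X}_k$: slice mix invertible means some linear combination of slices is invertible; a nonzero $\mathbf{x}$ is a JGE vector if $\mathbf{X}_\ell\mathbf{x}=\lambda_\ell\mathbf{y}$ for all $\ell$ for some $\boldsymbol{\lambda}$ and nonzero $\mathbf{y}$, and then $\mathrm{span}(\boldsymbol{\lambda})$ is a JGE value and $(\mathrm{span}(\boldsymbol{\lambda}),\mathbf{x})$ a JGE pair; $p_{\mathcal{X}}(\boldsymbol{\gamma})=\det(\sum_k\gamma_k\mathbf{X}_k)$; the algebraic multiplicity of $\mathrm{span}(\boldsymbol{\lambda})$ is the largest $m$ with $(\sum_k\lambda_k\gamma_k)^m\mid p_{\mathcal{X}}$ (a JGE value may also mean any $\mathrm{span}(\boldsymbol\lambda)$ with positive algebraic multiplicity); the geometric multiplicity is the dimension of the span of JGE vectors paired with it. *)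

theory Defs
  imports "HOL-Analysis.Analysis"
begin

text \<open>Tensors in K^(R x R x K) are represented by their frontal slices:
  a function from a finite index type 'k (the K slices) to R x R matrices.\<close>

definition slice_mix :: "('k::finite \<Rightarrow> 'a::comm_ring_1^'r^'r) \<Rightarrow> 'a^'k \<Rightarrow> 'a^'r^'r" where
  "slice_mix X \<gamma> = (\<chi> i j. \<Sum>k\<in>UNIV. \<gamma>$k * (X k)$i$j)"

definition slice_mix_invertible :: "('k::finite \<Rightarrow> 'a::comm_ring_1^'r^'r) \<Rightarrow> bool" where
  "slice_mix_invertible X \<longleftrightarrow> (\<exists>\<gamma>. invertible (slice_mix X \<gamma>))"

definition mode3 :: "('k::finite \<Rightarrow> 'a::comm_ring_1^'r^'r) \<Rightarrow> 'a^'k^'k \<Rightarrow> ('k \<Rightarrow> 'a^'r^'r)" where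
  "mode3 X U = (\<lambda>k. \<chi> i j. \<Sum>l\<in>UNIV. U$k$l * (X l)$i$j)"

definition jge_pair :: "('k::finite \<Rightarrow> 'a::field^'r^'r) \<Rightarrow> ('a^'k) set \<Rightarrow> 'a^'r \<Rightarrow> bool" where
  "jge_pair X \<Lambda> x \<longleftrightarrow> x \<noteq> 0 \<and>
     (\<exists>lam y. \<Lambda> = vec.span {lam} \<and> y \<noteq> 0 \<and> (\<forall>l. X l *v x = lam$l *s y))"

definition jge_vector :: "('k::finite \<Rightarrow> 'a::field^'r^'r) \<Rightarrow> 'a^'r \<Rightarrow> bool" where
  "jge_vector X x \<longleftrightarrow> (\<exists>\<Lambda>. jge_pair X \<Lambda> x)"

definition jge_value :: "('k::finite \<Rightarrow> 'a::field^'r^'r) \<Rightarrow> ('a^'k) set \<Rightarrow> bool" where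
  "jge_value X \<Lambda> \<longleftrightarrow> (\<exists>x. jge_pair X \<Lambda> x)"

text \<open>Polynomial functions in the variables gamma_k (over an infinite field these are
  exactly multivariate polynomials).\<close>
inductive poly_fun :: "('a::comm_ring_1^'k \<Rightarrow> 'a) \<Rightarrow> bool" where
  pf_const: "poly_fun (\<lambda>\<gamma>. c)"
| pf_var: "poly_fun (\<lambda>\<gamma>. \<gamma>$k)"
| pf_add: "poly_fun f \<Longrightarrow> poly_fun g \<Longrightarrow> poly_fun (\<lambda>\<gamma>. f \<gamma> + g \<gamma>)"
| pf_mult: "poly_fun f \<Longrightarrow> poly_fun g \<Longrightarrow> poly_fun (\<lambda>\<gamma>. f \<gamma> * g \<gamma>)"

definition poly_dvd :: "('a::comm_ring_1^'k \<Rightarrow> 'a) \<Rightarrow> ('a^'k \<Rightarrow> 'a) \<Rightarrow> bool" where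
  "poly_dvd f g \<longleftrightarrow> (\<exists>q. poly_fun q \<and> (\<forall>\<gamma>. g \<gamma> = f \<gamma> * q \<gamma>))"

definition char_poly :: "('k::finite \<Rightarrow> 'a::comm_ring_1^'r^'r) \<Rightarrow> 'a^'k \<Rightarrow> 'a" where
  "char_poly X \<gamma> = det (slice_mix X \<gamma>)"

definition alg_mult :: "('k::finite \<Rightarrow> 'a::field^'r^'r) \<Rightarrow> ('a^'k) set \<Rightarrow> nat" where
  "alg_mult X \<Lambda> = (GREATEST m. \<exists>lam. \<Lambda> = vec.span {lam} \<and>
      poly_dvd (\<lambda>\<gamma>. (\<Sum>k\<in>UNIV. lam$k * \<gamma>$k) ^ m) (char_poly X))"

definition geom_mult :: "('k::finite \<Rightarrow> 'a::field^'r^'r) \<Rightarrow> ('a^'k) set \<Rightarrow> nat" where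
  "geom_mult X \<Lambda> = vec.dim (vec.span {x. jge_pair X \<Lambda> x})"

end

theory Submission
  imports Defs
begin

text \<open>Multiplying a tensor along mode 3 by U turns its slice mix at \<gamma> into the slice mix of
  the original tensor at U^T \<gamma>. Hence the characteristic polynomial of T \<cdot>_3 U is that of T
  composed with the linear substitution \<gamma> \<mapsto> U^T \<gamma>, which turns the linear form
  \<gamma> \<mapsto> \<lambda>^T \<gamma> into \<gamma> \<mapsto> (U \<lambda>)^T \<gamma>; and the slices of T \<cdot>_3 U are combinations of those
  of T, so a JGE vector with value \<lambda> becomes one with value U \<lambda>. These transfers hold for an
  arbitrary U; when U is invertible, T is recovered as (T \<cdot>_3 U) \<cdot>_3 U^-1, so they can be
  reversed and both multiplicities are preserved.\<close>

lemma poly_fun_sum: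
  assumes "finite S" "\<And>i. i \<in> S \<Longrightarrow> poly_fun (f i)"
  shows "poly_fun (\<lambda>\<gamma>. \<Sum>i\<in>S. f i \<gamma>)"
  using assms
proof (induction S rule: finite_induct)
  case empty
  then show ?case using pf_const[of 0] by simp
next
  case (insert x F)
  then show ?case by (simp add: pf_add)
qed

lemma poly_fun_compose_linear:
  fixes A :: "'a::comm_ring_1^'k::finite^'k"
  assumes "poly_fun q"
  shows "poly_fun (\<lambda>\<gamma>. q (A *v \<gamma>))"
  using assms
proof (induction rule: poly_fun.induct)
  case (pf_const c)
  then show ?case by (rule poly_fun.pf_const)
next
  case (pf_var k)
  have "poly_fun (\<lambda>\<gamma>. \<Sum>j\<in>UNIV. A$k$j * \<gamma>$j)"
    by (rule poly_fun_sum) (auto intro: poly_fun.intros)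
  then show ?case by (simp add: matrix_vector_mult_def)
next
  case (pf_add f g)
  then show ?case by (simp add: poly_fun.pf_add)
next
  case (pf_mult f g)
  then show ?case by (simp add: poly_fun.pf_mult)
qed

lemma poly_dvd_compose_linear:
  fixes A :: "'a::comm_ring_1^'k::finite^'k"
  assumes "poly_dvd f g"
  shows "poly_dvd (\<lambda>\<gamma>. f (A *v \<gamma>)) (\<lambda>\<gamma>. g (A *v \<gamma>))"
  using assms poly_fun_compose_linear unfolding poly_dvd_def by blast

lemma sum_mult_transpose_mulv:
  fixes U :: "'a::comm_ring_1^'k::finite^'k"
  shows "(\<Sum>k\<in>UNIV. lam$k * (transpose U *v \<gamma>)$k) = (\<Sum>k\<in>UNIV. (U *v lam)$k * \<gamma>$k)"
  unfolding matrix_vector_mult_def transpose_def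
  by (simp add: sum_distrib_left sum_distrib_right mult_ac) (rule sum.swap)

lemma slice_mix_mode3:
  "slice_mix (mode3 X U) \<gamma> = slice_mix X (transpose U *v \<gamma>)"
  unfolding slice_mix_def mode3_def matrix_vector_mult_def transpose_def
  by (simp add: vec_eq_iff sum_distrib_left sum_distrib_right mult_ac) (intro allI sum.swap)

lemma char_poly_mode3:
  "char_poly (mode3 X U) = (\<lambda>\<gamma>. char_poly X (transpose U *v \<gamma>))"
  unfolding char_poly_def slice_mix_mode3 ..

lemma mode3_mode3:
  fixes X :: "'k::finite \<Rightarrow> 'a::comm_ring_1^'r^'r"
  shows "mode3 (mode3 X U) V = mode3 X (V ** U)"
  unfolding mode3_def matrix_matrix_mult_def
  by (simp add: fun_eq_iff vec_eq_iff sum_distrib_left sum_distrib_right mult_ac) (intro allI sum.swap)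

lemma mode3_mat_1:
  fixes X :: "'k::finite \<Rightarrow> 'a::comm_ring_1^'r^'r"
  shows "mode3 X (mat 1) = X"
  by (simp add: mode3_def mat_def fun_eq_iff vec_eq_iff if_distrib[of "\<lambda>c. c * _"] cong: if_cong)

lemma mode3_mulv:
  "mode3 X U k *v x = (\<Sum>l\<in>UNIV. U$k$l *s (X l *v x))"
  unfolding mode3_def matrix_vector_mult_def
  by (simp add: vec_eq_iff sum_distrib_left sum_distrib_right mult_ac) (intro allI sum.swap)

lemma span_singleton_mulv:
  fixes U :: "'a::field^'k::finite^'k"
  shows "vec.span {U *v a} = (\<lambda>v. U *v v) ` vec.span {a}"
  by (simp only: vec.span_singleton image_image vector_scalar_commute)

lemma span_singleton_mulv_cong:
  fixes U :: "'a::field^'k::finite^'k"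
  assumes "vec.span {a} = vec.span {b}"
  shows "vec.span {U *v a} = vec.span {U *v b}"
  using assms by (simp add: span_singleton_mulv)

lemma slice_mix_invertible_mode3:
  assumes "slice_mix_invertible X" and "invertible U"
  shows "slice_mix_invertible (mode3 X U)"
proof -
  obtain g where g: "invertible (slice_mix X g)"
    using assms(1) unfolding slice_mix_invertible_def by blast
  obtain V where "V ** U = mat 1"
    using assms(2) unfolding invertible_def by blast
  then have "transpose U *v (transpose V *v g) = g"
    by (simp only: matrix_vector_mul_assoc flip: matrix_transpose_mul) (simp add: transpose_mat)
  then have "slice_mix (mode3 X U) (transpose V *v g) = slice_mix X g"
    by (simp add: slice_mix_mode3)
  then show ?thesis
    unfolding slice_mix_invertible_def using g by metis
qed

lemma jge_pair_mode3:
  fixes X :: "'k::finite \<Rightarrow> 'a::field^'r^'r"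
  assumes "jge_pair X (vec.span {a}) x"
  shows "jge_pair (mode3 X U) (vec.span {U *v a}) x"
proof -
  obtain lam y where "x \<noteq> 0" "y \<noteq> 0" and span: "vec.span {a} = vec.span {lam}"
    and eigen: "\<And>l. X l *v x = lam$l *s y"
    using assms unfolding jge_pair_def by blast
  have "mode3 X U k *v x = (U *v lam)$k *s y" for k
    unfolding mode3_mulv eigen
    by (simp add: vec_eq_iff matrix_vector_mult_def sum_distrib_left mult_ac)
  with \<open>x \<noteq> 0\<close> \<open>y \<noteq> 0\<close> span_singleton_mulv_cong[OF span] show ?thesis
    unfolding jge_pair_def by blast
qed

definition char_poly_power_dvd :: "('k::finite \<Rightarrow> 'a::field^'r^'r) \<Rightarrow> ('a^'k) set \<Rightarrow> nat \<Rightarrow> bool" where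
  "char_poly_power_dvd X \<Lambda> m \<longleftrightarrow> (\<exists>lam. \<Lambda> = vec.span {lam} \<and>
      poly_dvd (\<lambda>\<gamma>. (\<Sum>k\<in>UNIV. lam$k * \<gamma>$k) ^ m) (char_poly X))"

lemma alg_mult_eq_Greatest: "alg_mult X \<Lambda> = (GREATEST m. char_poly_power_dvd X \<Lambda> m)"
  unfolding alg_mult_def char_poly_power_dvd_def ..

lemma char_poly_power_dvd_mode3:
  fixes X :: "'k::finite \<Rightarrow> 'a::field^'r^'r"
  assumes "char_poly_power_dvd X (vec.span {a}) m"
  shows "char_poly_power_dvd (mode3 X U) (vec.span {U *v a}) m"
proof -
  obtain lam where span: "vec.span {a} = vec.span {lam}"
    and dvd: "poly_dvd (\<lambda>\<gamma>. (\<Sum>k\<in>UNIV. lam$k * \<gamma>$k) ^ m) (char_poly X)"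
    using assms unfolding char_poly_power_dvd_def by blast
  have "poly_dvd (\<lambda>\<gamma>. (\<Sum>k\<in>UNIV. (U *v lam)$k * \<gamma>$k) ^ m) (char_poly (mode3 X U))"
    using poly_dvd_compose_linear[OF dvd, of "transpose U"]
    by (simp only: char_poly_mode3 sum_mult_transpose_mulv)
  with span_singleton_mulv_cong[OF span] show ?thesis
    unfolding char_poly_power_dvd_def by blast
qed

lemma mode3_invertible_cancel:
  fixes X :: "'k::finite \<Rightarrow> 'a::field^'r^'r"
  assumes "invertible U"
  obtains V where "mode3 (mode3 X U) V = X" and "V *v (U *v a) = a"
proof -
  obtain V where "V ** U = mat 1"
    using assms unfolding invertible_def by blast
  then show thesis
    by (intro that[of V]) (simp_all add: mode3_mode3 mode3_mat_1 matrix_vector_mul_assoc)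
qed

lemma jge_pair_mode3_iff:
  fixes X :: "'k::finite \<Rightarrow> 'a::field^'r^'r"
  assumes "invertible U"
  shows "jge_pair (mode3 X U) (vec.span {U *v a}) = jge_pair X (vec.span {a})"
proof -
  obtain V where "mode3 (mode3 X U) V = X" and "V *v (U *v a) = a"
    using mode3_invertible_cancel[OF assms] .
  then show ?thesis
    using jge_pair_mode3[of X a _ U] jge_pair_mode3[of "mode3 X U" "U *v a" _ V]
    by fastforce
qed

lemma char_poly_power_dvd_mode3_iff:
  fixes X :: "'k::finite \<Rightarrow> 'a::field^'r^'r"
  assumes "invertible U"
  shows "char_poly_power_dvd (mode3 X U) (vec.span {U *v a}) = char_poly_power_dvd X (vec.span {a})"
proof -
  obtain V where "mode3 (mode3 X U) V = X" and "V *v (U *v a) = a"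
    using mode3_invertible_cancel[OF assms] .
  then show ?thesis
    using char_poly_power_dvd_mode3[of X a _ U] char_poly_power_dvd_mode3[of "mode3 X U" "U *v a" _ V]
    by fastforce
qed

theorem lemma5p2:
  fixes T :: "'k::finite \<Rightarrow> 'a::field_char_0^'r^'r"
    and U :: "'a^'k^'k" and lam :: "'a^'k"
  assumes "slice_mix_invertible T"
    and "jge_value T (vec.span {lam})"
    and "invertible U"
  shows "slice_mix_invertible (mode3 T U)
    \<and> jge_value (mode3 T U) (vec.span {U *v lam})
    \<and> alg_mult (mode3 T U) (vec.span {U *v lam}) = alg_mult T (vec.span {lam})
    \<and> (\<forall>x. jge_pair T (vec.span {lam}) x \<longrightarrow> jge_pair (mode3 T U) (vec.span {U *v lam}) x)
    \<and> geom_mult (mode3 T U) (vec.span {U *v lam}) = geom_mult T (vec.span {lam})"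
  using slice_mix_invertible_mode3[OF assms(1,3)] assms(2)
  unfolding jge_value_def geom_mult_def alg_mult_eq_Greatest
    jge_pair_mode3_iff[OF assms(3)] char_poly_power_dvd_mode3_iff[OF assms(3)]
  by simp

end
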